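(* Let $\mathcal R$ be a finite set of existential rules. Then, as graphs on the same node set, $PG^U(\mathcal R) \subseteq PG^D(\mathcal R) \subseteq PG^F(\mathcal R)$ (every edge of $PG^U(\mathcal R)$ is an edge of $PG^D(\mathcal R)$, and every edge of $PG^D(\mathcal R)$ is an edge of $PG^F(\mathcal R)$). Furthermore, if the transitive closure of $GRD(\mathcal R)$ is a complete graph, then $PG^D(\mathcal R) = PG^F(\mathcal R)$.
   Context: Vocabulary: predicates, constants, variables, no other function symbols. An atom is $p(t_1,\dots,t_k)$ with $t_i$ terms (variables or constants); an atomset is a finite set of atoms. A homomorphism from atomset $A$ to atomset $F$ is a substitution $\sigma$ of the variables of $A$ by terms with $\sigma(A)\subseteq F$. An existential rule $R: B\to H$ consists of atomsets $B$ (body) and $H$ (head), read as $\forall \vec x\forall\vec y(B\to\exists\vec z\, H)$; frontier variables are those in both $B$ and $H$, existential variables those only in $H$. Distinct rules share no variables. $R$ is applicable to $F$ via a homomorphism $\pi:B\to F$, and $\alpha(F,R,\pi)=F\cup\pi(\mathrm{safe}(H))$, where $\mathrm{safe}(H)$ renames existential variables by fresh variables. A homomorphism $\pi'$ from a body $B_j$ to $\alpha(F,R_i,\pi)$ is new if $\pi'(B_j)\not\subseteq F$, and useful if it cannot be extended to a homomorphism from $B_j\cup H_j$ to $\alpha(F,R_i,\pi)$. Rule $R_j$ depends on $R_i$ if there is an atomset $F$ and homomorphism $\pi$ with $R_i$ applicable to $F$ by $\pi$ and $R_j$ applicable to $\alpha(F,R_i,\pi)$ by a new useful homomorphism. The graph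 of rule dependencies $GRD(\mathcal R)$ has node set $\mathcal R$ and an edge $(R_i,R_j)$ iff $R_j$ depends on $R_i$. A piece-unifier of a body $B_2$ with a head $H_1$ is a substitution $\mu$ of $\mathrm{vars}(B_2')\cup\mathrm{vars}(H_1')$, for some nonempty $B_2'\subseteq B_2$ and $H_1'\subseteq H_1$, such that $\mu(B_2')=\mu(H_1')$ and no variable of $B_2'$ that is unified with an existential variable of $H_1'$ occurs in $B_2\setminus B_2'$. Positions: for an atom $a=p(t_1,\dots,t_k)$, $[a,i]$ denotes its $i$-th position, with $\mathrm{pred}([a,i])=p$ and $\mathrm{term}([a,i])=t_i$; it is existential (resp. frontier) if $t_i$ is an existential (resp. frontier) variable. The basic position graph $PG(R)$ of $R:B\to H$ has a node for each position in an atom of $B$ or $H$, and an edge from each frontier position $[b,i]$ in $B$ to each position $[h,j]$ in $H$ such that $\mathrm{term}([b,i])=\mathrm{term}([h,j])$ or $[h,j]$ is existential. $PG(\mathcal R)$ is the disjoint union of the $PG(R)$, $R\in\mathcal R$. The graphs $PG^F(\mathcal R)$, $PG^D(\mathcal R)$, $PG^U(\mathcal R)$ are obtained from $PG(\mathcal R)$ by adding a transition edge from each $k$-th position $[h,k]$ in a head $H_i$ to each $k$-th position $[b,k]$ in a body $B_j$ with the same predicate, provided: (F) no condition; (D) there is a path from $R_i$ to $R_j$ in $GRD(\mathcal R)$; (U) there is a piece-unifier $\mu$ of $B_j$ with the head of an agglomerated rule $R_i^j$ such that $\mu(\mathrm{term}([b,k]))=\mu(\mathrm{term}([h,k]))$.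 Agglomerated rule: let $\mathrm{fr}$ be a fresh unary predicate. Let $\mathcal P$ be a nonempty set of paths in $GRD(\mathcal R)$ from $R_i$ to direct predecessors of $R_j$. For a path $P=(R_1,\dots,R_n)$ (with $R_1=R_i$) build $R^p_1=R_1,\dots,R^p_n=R^P$ where for $1\le l<n$ there is a piece-unifier $\mu_l$ of $B_{l+1}$ with the head of $R^p_l$, the body of $R^p_{l+1}$ is the body of $R^p_l$ together with $\{\mathrm{fr}(t)\mid t$ a term of the head of $R^p_l$ unified in $\mu_l\}$, and the head of $R^p_{l+1}$ is $H_1$. An agglomerated rule associated with $(R_i,R_j)$ is $R_i^j=\bigcup_{P\in\mathcal P}R^P$, i.e. of the form $B_i\cup\{\mathrm{fr}(t)\mid t\in T\}\to H_i$ for some $T\subseteq\mathrm{terms}(H_i)$. *)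

theory Defs
  imports Main
begin

datatype ('c, 'v) trm = Var 'v | Cst 'c

datatype ('p, 'c, 'v) atom = Atom (pred: 'p) (args: "('c, 'v) trm list")

fun subst_trm :: "('v \<Rightarrow> ('c, 'v) trm) \<Rightarrow> ('c, 'v) trm \<Rightarrow> ('c, 'v) trm" where
  "subst_trm \<sigma> (Var x) = \<sigma> x"
| "subst_trm \<sigma> (Cst c) = Cst c"

definition subst_atom :: "('v \<Rightarrow> ('c, 'v) trm) \<Rightarrow> ('p, 'c, 'v) atom \<Rightarrow> ('p, 'c, 'v) atom" where
  "subst_atom \<sigma> a = Atom (pred a) (map (subst_trm \<sigma>) (args a))"

definition subst_set :: "('v \<Rightarrow> ('c, 'v) trm) \<Rightarrow> ('p, 'c, 'v) atom set \<Rightarrow> ('p, 'c, 'v) atom set" where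
  "subst_set \<sigma> A = subst_atom \<sigma> ` A"

fun vars_trm :: "('c, 'v) trm \<Rightarrow> 'v set" where
  "vars_trm (Var x) = {x}"
| "vars_trm (Cst c) = {}"

definition vars_atom :: "('p, 'c, 'v) atom \<Rightarrow> 'v set" where
  "vars_atom a = (\<Union>t\<in>set (args a). vars_trm t)"

definition vars :: "('p, 'c, 'v) atom set \<Rightarrow> 'v set" where
  "vars A = (\<Union>a\<in>A. vars_atom a)"

definition terms :: "('p, 'c, 'v) atom set \<Rightarrow> ('c, 'v) trm set" where
  "terms A = (\<Union>a\<in>A. set (args a))"

definition hom :: "('v \<Rightarrow> ('c, 'v) trm) \<Rightarrow> ('p, 'c, 'v) atom set \<Rightarrow> ('p, 'c, 'v) atom set \<Rightarrow> bool" where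
  "hom \<sigma> A F \<longleftrightarrow> subst_set \<sigma> A \<subseteq> F"

datatype ('p, 'c, 'v) rule = Rule (body: "('p, 'c, 'v) atom set") (head: "('p, 'c, 'v) atom set")

definition frontier :: "('p, 'c, 'v) rule \<Rightarrow> 'v set" where
  "frontier R = vars (body R) \<inter> vars (head R)"

definition exvars :: "('p, 'c, 'v) rule \<Rightarrow> 'v set" where
  "exvars R = vars (head R) - vars (body R)"

definition vars_rule :: "('p, 'c, 'v) rule \<Rightarrow> 'v set" where
  "vars_rule R = vars (body R) \<union> vars (head R)"

text \<open>F' is a (the, up to the choice of fresh variables) result alpha(F,R,pi):
  F' = F \<union> pi(safe(H)), where safe renames the existential variables injectively
  by variables not occurring in F.\<close>
definition apply_result ::
  "('p, 'c, 'v) atom set \<Rightarrow> ('p, 'c, 'v) rule \<Rightarrow> ('v \<Rightarrow> ('c, 'v) trm) \<Rightarrow> ('p, 'c, 'v) atom set \<Rightarrow> bool" where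
  "apply_result F R \<pi> F' \<longleftrightarrow>
     (\<exists>\<rho>. inj_on \<rho> (exvars R) \<and> (\<forall>z\<in>exvars R. \<rho> z \<notin> vars F) \<and>
          F' = F \<union> subst_set (\<lambda>x. if x \<in> exvars R then Var (\<rho> x) else \<pi> x) (head R))"

definition depends_on :: "('p, 'c, 'v) rule \<Rightarrow> ('p, 'c, 'v) rule \<Rightarrow> bool" where
  "depends_on Rj Ri \<longleftrightarrow>
     (\<exists>F \<pi> F' \<pi>'. finite F \<and> hom \<pi> (body Ri) F \<and> apply_result F Ri \<pi> F' \<and>
        hom \<pi>' (body Rj) F' \<and>
        \<not> subst_set \<pi>' (body Rj) \<subseteq> F \<and>
        \<not> (\<exists>\<pi>''. (\<forall>x\<in>vars (body Rj). \<pi>'' x = \<pi>' x) \<and> hom \<pi>'' (body Rj \<union> head Rj) F'))"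

definition GRD :: "('p, 'c, 'v) rule set \<Rightarrow> (('p, 'c, 'v) rule \<times> ('p, 'c, 'v) rule) set" where
  "GRD Rs = {(Ri, Rj). Ri \<in> Rs \<and> Rj \<in> Rs \<and> depends_on Rj Ri}"

definition piece_unifier ::
  "('p, 'c, 'v) atom set \<Rightarrow> ('p, 'c, 'v) rule \<Rightarrow> ('p, 'c, 'v) atom set \<Rightarrow> ('p, 'c, 'v) atom set
     \<Rightarrow> ('v \<Rightarrow> ('c, 'v) trm) \<Rightarrow> bool" where
  "piece_unifier B2 R1 B2' H1' \<mu> \<longleftrightarrow>
     B2' \<subseteq> B2 \<and> B2' \<noteq> {} \<and> H1' \<subseteq> head R1 \<and>
     subst_set \<mu> B2' = subst_set \<mu> H1' \<and>
     (\<forall>x. x \<notin> vars B2' \<union> vars H1' \<longrightarrow> \<mu> x = Var x) \<and>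
     (\<forall>x\<in>vars B2'. \<forall>z\<in>exvars R1 \<inter> vars H1'. \<mu> x = \<mu> z \<longrightarrow> x \<notin> vars (B2 - B2'))"

text \<open>The fresh unary predicate fr is modelled as None, original predicates p as Some p.\<close>
definition lift_atom :: "('p, 'c, 'v) atom \<Rightarrow> ('p option, 'c, 'v) atom" where
  "lift_atom a = Atom (Some (pred a)) (args a)"

definition lift_set :: "('p, 'c, 'v) atom set \<Rightarrow> ('p option, 'c, 'v) atom set" where
  "lift_set A = lift_atom ` A"

definition fr_atom :: "('c, 'v) trm \<Rightarrow> ('p option, 'c, 'v) atom" where
  "fr_atom t = Atom None [t]"

definition agg_rule :: "('p, 'c, 'v) rule \<Rightarrow> ('c, 'v) trm set \<Rightarrow> ('p option, 'c, 'v) rule" where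
  "agg_rule Ri T = Rule (lift_set (body Ri) \<union> fr_atom ` T) (lift_set (head Ri))"

text \<open>agg_chain Rs Ri Rl T: there is a path (R_1 = Ri, ..., R_n = Rl) in GRD(Rs) together with
  piece-unifiers mu_l as in the construction, such that R^P = agg_rule Ri T.\<close>
inductive agg_chain ::
  "('p, 'c, 'v) rule set \<Rightarrow> ('p, 'c, 'v) rule \<Rightarrow> ('p, 'c, 'v) rule \<Rightarrow> ('c, 'v) trm set \<Rightarrow> bool"
  for Rs Ri where
  base: "Ri \<in> Rs \<Longrightarrow> agg_chain Rs Ri Ri {}"
| step: "agg_chain Rs Ri Rl T \<Longrightarrow> (Rl, Rm) \<in> GRD Rs \<Longrightarrow>
         piece_unifier (lift_set (body Rm)) (agg_rule Ri T) B' H' \<mu> \<Longrightarrow>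
         agg_chain Rs Ri Rm (T \<union> terms H')"

definition is_agglomerated :: "('p, 'c, 'v) rule set \<Rightarrow> ('p, 'c, 'v) rule \<Rightarrow> ('p, 'c, 'v) rule
     \<Rightarrow> ('c, 'v) trm set \<Rightarrow> bool" where
  "is_agglomerated Rs Ri Rj T \<longleftrightarrow>
     (\<exists>\<T>. \<T> \<noteq> {} \<and> T = \<Union>\<T> \<and>
        (\<forall>T'\<in>\<T>. \<exists>Rl. agg_chain Rs Ri Rl T' \<and> (Rl, Rj) \<in> GRD Rs))"

datatype side = InBody | InHead

type_synonym ('p, 'c, 'v) position = "('p, 'c, 'v) rule \<times> side \<times> ('p, 'c, 'v) atom \<times> nat"

text \<open>Nodes (common to all position graphs): positions [a,i] (0-based i) of atoms of the body
  or of the head of each rule, kept disjoint per rule and per side.\<close>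
definition positions :: "('p, 'c, 'v) rule set \<Rightarrow> ('p, 'c, 'v) position set" where
  "positions Rs = {(R, s, a, i). R \<in> Rs \<and>
      a \<in> (case s of InBody \<Rightarrow> body R | InHead \<Rightarrow> head R) \<and> i < length (args a)}"

definition PG_edges :: "('p, 'c, 'v) rule set \<Rightarrow> (('p, 'c, 'v) position \<times> ('p, 'c, 'v) position) set" where
  "PG_edges Rs = {((R, InBody, b, i), (R, InHead, h, j)) | R b i h j.
      R \<in> Rs \<and> b \<in> body R \<and> i < length (args b) \<and> h \<in> head R \<and> j < length (args h) \<and>
      (\<exists>x. args b ! i = Var x \<and> x \<in> frontier R) \<and>
      (args h ! j = args b ! i \<or> (\<exists>z. args h ! j = Var z \<and> z \<in> exvars R))}"

definition transition_edges ::
  "('p, 'c, 'v) rule set \<Rightarrow> (('p, 'c, 'v) rule \<Rightarrow> ('p, 'c, 'v) rule \<Rightarrow> ('p, 'c, 'v) atom \<Rightarrow> ('p, 'c, 'v) atom \<Rightarrow> nat \<Rightarrow> bool)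
     \<Rightarrow> (('p, 'c, 'v) position \<times> ('p, 'c, 'v) position) set" where
  "transition_edges Rs C = {((Ri, InHead, h, k), (Rj, InBody, b, k)) | Ri Rj h b k.
      Ri \<in> Rs \<and> Rj \<in> Rs \<and> h \<in> head Ri \<and> b \<in> body Rj \<and>
      k < length (args h) \<and> k < length (args b) \<and> pred h = pred b \<and> C Ri Rj h b k}"

definition PG_F :: "('p, 'c, 'v) rule set \<Rightarrow> (('p, 'c, 'v) position \<times> ('p, 'c, 'v) position) set" where
  "PG_F Rs = PG_edges Rs \<union> transition_edges Rs (\<lambda>Ri Rj h b k. True)"

definition PG_D :: "('p, 'c, 'v) rule set \<Rightarrow> (('p, 'c, 'v) position \<times> ('p, 'c, 'v) position) set" where
  "PG_D Rs = PG_edges Rs \<union> transition_edges Rs (\<lambda>Ri Rj h b k. (Ri, Rj) \<in> (GRD Rs)\<^sup>+)"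

definition PG_U :: "('p, 'c, 'v) rule set \<Rightarrow> (('p, 'c, 'v) position \<times> ('p, 'c, 'v) position) set" where
  "PG_U Rs = PG_edges Rs \<union> transition_edges Rs (\<lambda>Ri Rj h b k.
      \<exists>T B' H' \<mu>. is_agglomerated Rs Ri Rj T \<and>
        piece_unifier (lift_set (body Rj)) (agg_rule Ri T) B' H' \<mu> \<and>
        subst_trm \<mu> (args b ! k) = subst_trm \<mu> (args h ! k))"

end

theory Submission
  imports Defs
begin

text \<open>Every agglomerated rule \<open>R\<^sub>i\<^sup>j\<close> is built along paths of \<open>GRD\<close> from \<open>R\<^sub>i\<close> to direct
  predecessors of \<open>R\<^sub>j\<close>, so the unifier condition of \<open>PG\<^sup>U\<close> already entails a path from \<open>R\<^sub>i\<close>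
  to \<open>R\<^sub>j\<close>, the condition of \<open>PG\<^sup>D\<close>; that condition in turn is stronger than the empty
  condition of \<open>PG\<^sup>F\<close>, and becomes vacuous when the transitive closure of \<open>GRD\<close> is complete.
  None of this uses finiteness or the variable disjointness of the rules.\<close>

lemma agg_chain_rtrancl_GRD: "agg_chain Rs Ri Rl T \<Longrightarrow> (Ri, Rl) \<in> (GRD Rs)\<^sup>*"
  by (induction rule: agg_chain.induct) auto

lemma is_agglomerated_trancl_GRD:
  assumes "is_agglomerated Rs Ri Rj T"
  shows "(Ri, Rj) \<in> (GRD Rs)\<^sup>+"
proof -
  from assms obtain T' Rl where "agg_chain Rs Ri Rl T'" and "(Rl, Rj) \<in> GRD Rs"
    unfolding is_agglomerated_def by blast
  then show ?thesis by (meson agg_chain_rtrancl_GRD rtrancl_into_trancl1)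
qed

lemma transition_edges_mono:
  assumes "\<And>Ri Rj h b k. Ri \<in> Rs \<Longrightarrow> Rj \<in> Rs \<Longrightarrow> C Ri Rj h b k \<Longrightarrow> D Ri Rj h b k"
  shows "transition_edges Rs C \<subseteq> transition_edges Rs D"
  using assms unfolding transition_edges_def by blast

lemma transition_edges_cong:
  assumes "\<And>Ri Rj h b k. Ri \<in> Rs \<Longrightarrow> Rj \<in> Rs \<Longrightarrow> C Ri Rj h b k \<longleftrightarrow> D Ri Rj h b k"
  shows "transition_edges Rs C = transition_edges Rs D"
  using assms by (intro equalityI transition_edges_mono) blast+

lemma PG_U_subset_PG_D: "PG_U Rs \<subseteq> PG_D Rs"
  unfolding PG_U_def PG_D_def
  by (rule Un_mono[OF subset_refl transition_edges_mono]) (auto dest: is_agglomerated_trancl_GRD)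

lemma PG_D_subset_PG_F: "PG_D Rs \<subseteq> PG_F Rs"
  unfolding PG_D_def PG_F_def by (rule Un_mono[OF subset_refl transition_edges_mono]) simp

lemma PG_D_eq_PG_F_if_trancl_GRD_complete:
  assumes "\<forall>Ri\<in>Rs. \<forall>Rj\<in>Rs. (Ri, Rj) \<in> (GRD Rs)\<^sup>+"
  shows "PG_D Rs = PG_F Rs"
  unfolding PG_D_def PG_F_def using assms by (simp cong: transition_edges_cong)

theorem mainTheorem1:
  fixes Rs :: "('p, 'c, 'v) rule set"
  assumes "finite Rs"
    and "\<forall>R\<in>Rs. finite (body R) \<and> finite (head R)"
    and "\<forall>R1\<in>Rs. \<forall>R2\<in>Rs. R1 \<noteq> R2 \<longrightarrow> vars_rule R1 \<inter> vars_rule R2 = {}"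
  shows "PG_U Rs \<subseteq> PG_D Rs \<and> PG_D Rs \<subseteq> PG_F Rs \<and>
         ((\<forall>Ri\<in>Rs. \<forall>Rj\<in>Rs. (Ri, Rj) \<in> (GRD Rs)\<^sup>+) \<longrightarrow> PG_D Rs = PG_F Rs)"
  by (intro conjI impI PG_U_subset_PG_D PG_D_subset_PG_F PG_D_eq_PG_F_if_trancl_GRD_complete)

end
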